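(* Let $\xi_m>0$, $0\le\mu\le\xi_m$ and $T>0$, and let $$f(u)=2T\ln\frac{\cosh(\sqrt{\xi_m^2+u^2}/2T)}{\cosh(\sqrt{\mu^2+u^2}/2T)}+\mu\int_0^{\mu}\tanh\Big(\frac{\sqrt{\xi^2+u^2}}{2T}\Big)\frac{d\xi}{\sqrt{\xi^2+u^2}},\quad u>0.$$ Then $u\mapsto u f(u)$ is strictly increasing on $(0,\infty)$. *)

theory Defs
  imports "HOL-Analysis.Analysis"
begin

definition gap_f :: "real \<Rightarrow> real \<Rightarrow> real \<Rightarrow> real \<Rightarrow> real" where
  "gap_f \<xi>m \<mu> T u =
     2 * T * ln (cosh (sqrt (\<xi>m\<^sup>2 + u\<^sup>2) / (2 * T)) / cosh (sqrt (\<mu>\<^sup>2 + u\<^sup>2) / (2 * T)))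
     + \<mu> * integral {0..\<mu>} (\<lambda>\<xi>. tanh (sqrt (\<xi>\<^sup>2 + u\<^sup>2) / (2 * T)) / sqrt (\<xi>\<^sup>2 + u\<^sup>2))"

end

theory Submission
  imports Defs
begin

text \<open>With \<open>E = sqrt (\<xi>\<^sup>2 + u\<^sup>2)\<close>, the logarithmic term of \<open>f\<close> is the integral of
  \<open>\<xi> tanh (E / 2T) / E\<close> over \<open>[\<mu>, \<xi>m]\<close>, since \<open>2T ln cosh (E / 2T)\<close> is its antiderivative
  in \<open>\<xi>\<close>. Hence \<open>u f(u)\<close> is the integral over \<open>[0, \<xi>m]\<close> of the positive weight
  \<open>max \<mu> \<xi>\<close> times the kernel \<open>u tanh (E / 2T) / E\<close>, which is strictly increasing in \<open>u\<close>:
  \<open>u / E\<close> increases (weakly) and \<open>tanh (E / 2T)\<close> increases strictly and is positive.\<close>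

definition gap_kernel :: "real \<Rightarrow> real \<Rightarrow> real \<Rightarrow> real" where
  "gap_kernel T u \<xi> = u * tanh (sqrt (\<xi>\<^sup>2 + u\<^sup>2) / (2 * T)) / sqrt (\<xi>\<^sup>2 + u\<^sup>2)"

lemma divide_sqrt_add_square_mono:
  fixes u v \<xi> :: real
  assumes "0 < u" "u \<le> v"
  shows "u / sqrt (\<xi>\<^sup>2 + u\<^sup>2) \<le> v / sqrt (\<xi>\<^sup>2 + v\<^sup>2)"
proof -
  have "u\<^sup>2 * (\<xi>\<^sup>2 + v\<^sup>2) \<le> v\<^sup>2 * (\<xi>\<^sup>2 + u\<^sup>2)"
  proof -
    have "\<xi>\<^sup>2 * u\<^sup>2 \<le> \<xi>\<^sup>2 * v\<^sup>2"
      using assms by (simp add: mult_left_mono power_mono)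
    then show ?thesis by (simp add: algebra_simps)
  qed
  then have "u * sqrt (\<xi>\<^sup>2 + v\<^sup>2) \<le> v * sqrt (\<xi>\<^sup>2 + u\<^sup>2)"
    using assms by (metis less_le_trans order_less_imp_le real_sqrt_le_iff real_sqrt_mult
        real_sqrt_abs abs_of_nonneg)
  then show ?thesis
    using assms by (simp add: divide_simps add_nonneg_pos mult.commute)
qed

lemma gap_kernel_strict_mono:
  assumes "0 < u" "u < v" "0 < T"
  shows "gap_kernel T u \<xi> < gap_kernel T v \<xi>"
proof -
  define E where "E w = sqrt (\<xi>\<^sup>2 + w\<^sup>2)" for w
  have E_pos: "E u > 0" using assms by (simp add: E_def add_nonneg_pos)
  have "E u < E v"
    using assms by (simp add: E_def power_strict_mono)
  then have tanh_less: "tanh (E u / (2 * T)) < tanh (E v / (2 * T))"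
    using assms by (simp add: divide_strict_right_mono)
  have tanh_pos: "tanh (E u / (2 * T)) > 0"
    using E_pos assms by simp
  have ratio_le: "u / E u \<le> v / E v" and ratio_pos: "u / E u > 0"
    using divide_sqrt_add_square_mono[of u v \<xi>] assms E_pos by (simp_all add: E_def)
  have "u / E u * tanh (E u / (2 * T)) < v / E v * tanh (E v / (2 * T))"
    using ratio_le ratio_pos tanh_less tanh_pos
    by (smt (verit) mult_less_cancel_left_pos mult_right_mono)
  then show ?thesis
    by (simp add: gap_kernel_def E_def)
qed

lemma continuous_on_gap_kernel:
  assumes "0 < u" "0 < T"
  shows "continuous_on S (gap_kernel T u)"
proof -
  have "sqrt (\<xi>\<^sup>2 + u\<^sup>2) \<noteq> 0" for \<xi>
    using assms by (simp add: add_nonneg_pos)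
  then show ?thesis
    unfolding gap_kernel_def using assms by (intro continuous_intros) auto
qed

lemma ln_cosh_ratio_eq_integral:
  fixes a b u T :: real
  assumes "0 < u" "0 < T" "a \<le> b"
  shows "2 * T * ln (cosh (sqrt (b\<^sup>2 + u\<^sup>2) / (2 * T)) / cosh (sqrt (a\<^sup>2 + u\<^sup>2) / (2 * T)))
     = integral {a..b} (\<lambda>\<xi>. \<xi> * tanh (sqrt (\<xi>\<^sup>2 + u\<^sup>2) / (2 * T)) / sqrt (\<xi>\<^sup>2 + u\<^sup>2))"
proof -
  define F where "F \<xi> = 2 * T * ln (cosh (sqrt (\<xi>\<^sup>2 + u\<^sup>2) / (2 * T)))" for \<xi>
  have "(F has_real_derivative \<xi> * tanh (sqrt (\<xi>\<^sup>2 + u\<^sup>2) / (2 * T)) / sqrt (\<xi>\<^sup>2 + u\<^sup>2))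
          (at \<xi> within {a..b})" for \<xi>
  proof -
    have "\<xi>\<^sup>2 + u\<^sup>2 > 0" using assms by (simp add: add_nonneg_pos)
    then show ?thesis
      unfolding F_def using assms
      by (auto intro!: derivative_eq_intros simp: tanh_def field_simps power2_eq_square)
  qed
  then have "((\<lambda>\<xi>. \<xi> * tanh (sqrt (\<xi>\<^sup>2 + u\<^sup>2) / (2 * T)) / sqrt (\<xi>\<^sup>2 + u\<^sup>2))
               has_integral (F b - F a)) {a..b}"
    using assms by (intro fundamental_theorem_of_calculus)
      (auto simp: has_real_derivative_iff_has_vector_derivative[symmetric])
  moreover have "F b - F a
      = 2 * T * ln (cosh (sqrt (b\<^sup>2 + u\<^sup>2) / (2 * T)) / cosh (sqrt (a\<^sup>2 + u\<^sup>2) / (2 * T)))"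
    by (simp add: F_def ln_div right_diff_distrib)
  ultimately show ?thesis
    by (simp add: integral_unique)
qed

lemma times_gap_f_eq_integral:
  assumes "0 < u" "0 < T" "0 \<le> \<mu>" "\<mu> \<le> \<xi>m"
  shows "u * gap_f \<xi>m \<mu> T u = integral {0..\<xi>m} (\<lambda>\<xi>. max \<mu> \<xi> * gap_kernel T u \<xi>)"
proof -
  let ?w = "\<lambda>\<xi>. max \<mu> \<xi> * gap_kernel T u \<xi>"
  have "integral {\<mu>..\<xi>m} ?w = integral {\<mu>..\<xi>m} (\<lambda>\<xi>. u * (\<xi> * tanh (sqrt (\<xi>\<^sup>2 + u\<^sup>2) / (2 * T))
          / sqrt (\<xi>\<^sup>2 + u\<^sup>2)))"
    by (rule integral_cong) (auto simp: gap_kernel_def)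
  also have "\<dots> = u * (2 * T * ln (cosh (sqrt (\<xi>m\<^sup>2 + u\<^sup>2) / (2 * T))
                               / cosh (sqrt (\<mu>\<^sup>2 + u\<^sup>2) / (2 * T))))"
    unfolding ln_cosh_ratio_eq_integral[OF assms(1,2,4)] by (rule integral_mult_right)
  finally have upper: "integral {\<mu>..\<xi>m} ?w = \<dots>" .
  have "integral {0..\<mu>} ?w = integral {0..\<mu>} (\<lambda>\<xi>. u * \<mu> * (tanh (sqrt (\<xi>\<^sup>2 + u\<^sup>2) / (2 * T))
          / sqrt (\<xi>\<^sup>2 + u\<^sup>2)))"
    by (rule integral_cong) (auto simp: gap_kernel_def)
  also have "\<dots>
      = u * \<mu> * integral {0..\<mu>} (\<lambda>\<xi>. tanh (sqrt (\<xi>\<^sup>2 + u\<^sup>2) / (2 * T)) / sqrt (\<xi>\<^sup>2 + u\<^sup>2))"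
    by (rule integral_mult_right)
  finally have lower: "integral {0..\<mu>} ?w = \<dots>" .
  have "?w integrable_on {0..\<xi>m}"
    using continuous_on_gap_kernel[OF assms(1,2)]
    by (intro integrable_continuous_real continuous_intros)
  then have "integral {0..\<xi>m} ?w = integral {0..\<mu>} ?w + integral {\<mu>..\<xi>m} ?w"
    using assms by (simp add: Henstock_Kurzweil_Integration.integral_combine)
  then show ?thesis
    unfolding upper lower gap_f_def by (simp add: algebra_simps)
qed

theorem mainTheorem5:
  fixes \<xi>m \<mu> T :: real
  assumes "\<xi>m > 0" and "0 \<le> \<mu>" and "\<mu> \<le> \<xi>m" and "T > 0"
  shows "strict_mono_on {0<..} (\<lambda>u. u * gap_f \<xi>m \<mu> T u)"
proof (rule strict_mono_onI)
  fix u v :: real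
  assume "u \<in> {0<..}" "v \<in> {0<..}" "u < v"
  then have u: "0 < u" and v: "0 < v" and "u < v" by auto
  have "integral {0..\<xi>m} (\<lambda>\<xi>. max \<mu> \<xi> * gap_kernel T u \<xi>)
      < integral {0..\<xi>m} (\<lambda>\<xi>. max \<mu> \<xi> * gap_kernel T v \<xi>)"
  proof (rule integral_less_real)
    have "continuous_on {0..\<xi>m} (\<lambda>\<xi>. max \<mu> \<xi> * gap_kernel T w \<xi>)" if "0 < w" for w
      using continuous_on_gap_kernel[OF that assms(4)] by (intro continuous_intros)
    then show "continuous_on {0..\<xi>m} (\<lambda>\<xi>. max \<mu> \<xi> * gap_kernel T u \<xi>)"
      and "continuous_on {0..\<xi>m} (\<lambda>\<xi>. max \<mu> \<xi> * gap_kernel T v \<xi>)"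
      using u v by auto
    show "{0<..<\<xi>m} \<noteq> {}"
      using assms(1) by simp
    show "max \<mu> \<xi> * gap_kernel T u \<xi> < max \<mu> \<xi> * gap_kernel T v \<xi>" if "\<xi> \<in> {0<..<\<xi>m}" for \<xi>
    proof -
      have "max \<mu> \<xi> > 0" using that by (simp add: less_max_iff_disj)
      then show ?thesis
        using gap_kernel_strict_mono[OF u \<open>u < v\<close> assms(4)] by simp
    qed
  qed
  then show "u * gap_f \<xi>m \<mu> T u < v * gap_f \<xi>m \<mu> T v"
    using times_gap_f_eq_integral[OF _ assms(4,2,3)] u v by simp
qed

end
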